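(* Let $b\in\mathcal E_1$ with $b(t)=1+\phi(t)$, $\phi$ flat at $0$. Let $\theta$ be the inverse germ of $t\mapsto t\,b(t)$, write $\theta(x)=x\,c(x)$ (so $c\in\mathcal E_1$ and $c-1$ is flat at $0$), and set $\sigma(x)=\theta(x)^4$, $\sigma^0=\mathrm{id}$, $\sigma^n=\sigma\circ\sigma^{n-1}$. Then the infinite product $$\Big(\prod_{n=0}^{\infty}c(\sigma^n(x))^{1/4^n}\Big)^{1/2}$$ converges on a neighbourhood of $0$ and defines a $C^\infty$ function there.
   Context: $\mathcal E_1$ denotes the ring of smooth function germs at $0\in\mathbb R$. A function germ is flat at $0$ if all its derivatives (including its value) vanish at $0$. *)

theory Defs
  imports "HOL-Analysis.Analysis"
begin

definition smooth_on :: "real set \<Rightarrow> (real \<Rightarrow> real) \<Rightarrow> bool" where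
  "smooth_on U f \<longleftrightarrow> (\<forall>k. \<forall>x\<in>U. ((deriv ^^ k) f) differentiable (at x))"

definition flat_at_0 :: "(real \<Rightarrow> real) \<Rightarrow> bool" where
  "flat_at_0 f \<longleftrightarrow> (\<forall>k. (deriv ^^ k) f 0 = 0)"

end

theory Submission
  imports Defs
begin

text \<open>Dividing \<open>\<theta>(x) b(\<theta>(x)) = x\<close> by \<open>x\<close> and letting \<open>x \<rightarrow> 0\<close> gives
  \<open>c(0) b(0) = 1\<close>, so \<open>c(0) = 1\<close>; and \<open>\<sigma>'(0) = 0\<close>, so the origin is an attracting fixed point
  of \<open>\<sigma>\<close>. On a small ball \<open>B\<close> around it, \<open>\<sigma>\<close> maps \<open>B\<close> into itself with \<open>|\<sigma>'| \<le> L < 1\<close>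
  and \<open>c > 0\<close>, and the product is \<open>exp (\<Sum>n. 4\<^sup>-\<^sup>n ln c(\<sigma>\<^sup>n x))\<close>. Differentiating
  \<open>(\<sigma>\<^sup>n\<^sup>+\<^sup>1)' = \<sigma>'(\<sigma>\<^sup>n) (\<sigma>\<^sup>n)'\<close> \<open>m\<close> times gives \<open>|D\<^sup>m (\<sigma>\<^sup>n\<^sup>+\<^sup>1)'| \<le> L |D\<^sup>m (\<sigma>\<^sup>n)'| + R\<close>,
  where \<open>R\<close> only involves derivatives of lower order; so by induction on \<open>m\<close> all derivatives of
  the iterates \<open>\<sigma>\<^sup>n\<close>, and hence of \<open>ln c \<circ> \<sigma>\<^sup>n\<close>, are bounded uniformly in \<open>n\<close>. Every
  differentiated series is then dominated by a geometric one, so the sum is smooth.\<close>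

section \<open>Finite-order differentiability\<close>

definition differentiable_upto :: "nat \<Rightarrow> real set \<Rightarrow> (real \<Rightarrow> real) \<Rightarrow> bool" where
  "differentiable_upto k S f \<longleftrightarrow> (\<forall>j\<le>k. \<forall>x\<in>S. (deriv ^^ j) f differentiable (at x))"

lemma smooth_on_iff_differentiable_upto: "smooth_on S f \<longleftrightarrow> (\<forall>k. differentiable_upto k S f)"
  unfolding smooth_on_def differentiable_upto_def by blast

lemma differentiable_upto_mono: "differentiable_upto k S f \<Longrightarrow> j \<le> k \<Longrightarrow> differentiable_upto j S f"
  unfolding differentiable_upto_def by auto

lemma differentiable_uptoD:
  "differentiable_upto k S f \<Longrightarrow> j \<le> k \<Longrightarrow> x \<in> S \<Longrightarrow> (deriv ^^ j) f differentiable (at x)"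
  unfolding differentiable_upto_def by blast

lemma differentiable_upto_0: "differentiable_upto 0 S f \<longleftrightarrow> (\<forall>x\<in>S. f differentiable (at x))"
  unfolding differentiable_upto_def by simp

lemma higher_deriv_Suc: "(deriv ^^ Suc k) f = (deriv ^^ k) (deriv f)"
  by (simp add: funpow_Suc_right del: funpow.simps)

lemma differentiable_upto_Suc_iff:
  "differentiable_upto (Suc k) S f \<longleftrightarrow>
     (\<forall>x\<in>S. f differentiable (at x)) \<and> differentiable_upto k S (deriv f)"
  unfolding differentiable_upto_def
  by (metis Suc_le_mono funpow_0 higher_deriv_Suc le0 not0_implies_Suc)

lemma higher_deriv_cong_open:
  assumes "open S" "\<And>y. y \<in> S \<Longrightarrow> f y = g y" "x \<in> S"
  shows "(deriv ^^ k) f x = (deriv ^^ k) g x"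
  using eventually_nhds_in_open[OF assms(1,3)]
  by (intro higher_deriv_cong_ev refl) (auto elim!: eventually_mono intro: assms(2))

lemma differentiable_at_cong_open:
  fixes f g :: "real \<Rightarrow> real"
  assumes "open S" "\<And>y. y \<in> S \<Longrightarrow> f y = g y" "x \<in> S" "g differentiable (at x)"
  shows "f differentiable (at x)"
  using differentiable_transform_within[of g x S 1 f] assms at_within_open[OF assms(3,1)]
  by auto

lemma differentiable_upto_cong_open:
  assumes "open S" "\<And>y. y \<in> S \<Longrightarrow> f y = g y" "differentiable_upto k S g"
  shows "differentiable_upto k S f"
  unfolding differentiable_upto_def
proof (intro allI impI ballI)
  fix j x assume "j \<le> k" "x \<in> S"
  have "(deriv ^^ j) f y = (deriv ^^ j) g y" if "y \<in> S" for y
    using higher_deriv_cong_open[OF assms(1)] assms(2) that by blast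
  then show "(deriv ^^ j) f differentiable (at x)"
    using differentiable_at_cong_open[OF assms(1)] differentiable_uptoD[OF assms(3)] \<open>j \<le> k\<close> \<open>x \<in> S\<close>
    by blast
qed

lemma differentiable_upto_higher_DERIV:
  "differentiable_upto k S f \<Longrightarrow> j \<le> k \<Longrightarrow> x \<in> S \<Longrightarrow>
     ((deriv ^^ j) f has_real_derivative (deriv ^^ Suc j) f x) (at x)"
  using differentiable_uptoD by (simp add: DERIV_deriv_iff_real_differentiable)

lemma differentiable_upto_SucI:
  assumes "open S" "\<And>x. x \<in> S \<Longrightarrow> (f has_real_derivative f' x) (at x)" "differentiable_upto k S f'"
  shows "differentiable_upto (Suc k) S f"
  unfolding differentiable_upto_Suc_iff
proof
  show "\<forall>x\<in>S. f differentiable (at x)"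
    using assms(2) real_differentiable_def by blast
  show "differentiable_upto k S (deriv f)"
    using differentiable_upto_cong_open[OF assms(1) _ assms(3)] assms(2) DERIV_imp_deriv by blast
qed

lemma differentiable_upto_const: "open S \<Longrightarrow> differentiable_upto k S (\<lambda>y. a)"
proof (induction k arbitrary: a)
  case (Suc k)
  then show ?case by (intro differentiable_upto_SucI[where f'="\<lambda>y. 0"]) auto
qed (simp add: differentiable_upto_0)

lemma differentiable_upto_ident: "open S \<Longrightarrow> differentiable_upto k S (\<lambda>y. y)"
proof (cases k)
  case (Suc m)
  then show "open S \<Longrightarrow> ?thesis"
    by (auto intro!: differentiable_upto_SucI[where f'="\<lambda>y. 1"] differentiable_upto_const)
qed (simp add: differentiable_upto_0)

lemma differentiable_upto_Suc_DERIV: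
  "differentiable_upto (Suc k) S f \<Longrightarrow> x \<in> S \<Longrightarrow> (f has_real_derivative deriv f x) (at x)"
  by (simp add: differentiable_upto_Suc_iff DERIV_deriv_iff_real_differentiable)

lemma differentiable_upto_add:
  "open S \<Longrightarrow> differentiable_upto k S f \<Longrightarrow> differentiable_upto k S g \<Longrightarrow>
     differentiable_upto k S (\<lambda>y. f y + g y)"
proof (induction k arbitrary: f g)
  case (Suc k)
  show ?case
  proof (rule differentiable_upto_SucI[where f'="\<lambda>y. deriv f y + deriv g y"])
    show "((\<lambda>y. f y + g y) has_real_derivative deriv f x + deriv g x) (at x)" if "x \<in> S" for x
      using Suc.prems that by (intro DERIV_add differentiable_upto_Suc_DERIV)
    show "differentiable_upto k S (\<lambda>y. deriv f y + deriv g y)"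
      using Suc by (simp add: differentiable_upto_Suc_iff)
  qed (rule Suc.prems)
qed (simp add: differentiable_upto_0 differentiable_add)

lemma differentiable_upto_cmult:
  "open S \<Longrightarrow> differentiable_upto k S f \<Longrightarrow> differentiable_upto k S (\<lambda>y. a * f y)"
proof (induction k arbitrary: f)
  case (Suc k)
  show ?case
  proof (rule differentiable_upto_SucI[where f'="\<lambda>y. a * deriv f y"])
    show "((\<lambda>y. a * f y) has_real_derivative a * deriv f x) (at x)" if "x \<in> S" for x
      using Suc.prems that by (intro DERIV_cmult differentiable_upto_Suc_DERIV)
    show "differentiable_upto k S (\<lambda>y. a * deriv f y)"
      using Suc by (simp add: differentiable_upto_Suc_iff)
  qed (rule Suc.prems)
qed (simp add: differentiable_upto_0 differentiable_mult)

lemma differentiable_upto_mult: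
  "open S \<Longrightarrow> differentiable_upto k S f \<Longrightarrow> differentiable_upto k S g \<Longrightarrow>
     differentiable_upto k S (\<lambda>y. f y * g y)"
proof (induction k arbitrary: f g)
  case (Suc k)
  show ?case
  proof (rule differentiable_upto_SucI[where f'="\<lambda>y. f y * deriv g y + deriv f y * g y"])
    show "((\<lambda>y. f y * g y) has_real_derivative f x * deriv g x + deriv f x * g x) (at x)"
      if "x \<in> S" for x
      using Suc.prems that by (intro DERIV_mult' differentiable_upto_Suc_DERIV)
    have "differentiable_upto k S f" "differentiable_upto k S g"
      using Suc.prems differentiable_upto_mono le_SucI by blast+
    then show "differentiable_upto k S (\<lambda>y. f y * deriv g y + deriv f y * g y)"
      using Suc by (intro differentiable_upto_add Suc.IH) (simp_all add: differentiable_upto_Suc_iff)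
  qed (rule Suc.prems)
qed (simp add: differentiable_upto_0 differentiable_mult)

lemma differentiable_upto_compose:
  assumes "open S" "open T" "u ` S \<subseteq> T"
  shows "differentiable_upto k T g \<Longrightarrow> differentiable_upto k S u \<Longrightarrow>
           differentiable_upto k S (\<lambda>y. g (u y))"
proof (induction k arbitrary: g)
  case 0
  then show ?case
    using assms(3) differentiable_chain_at[of u _ g] by (auto simp: differentiable_upto_0 o_def)
next
  case (Suc k)
  show ?case
  proof (rule differentiable_upto_SucI[OF assms(1), where f'="\<lambda>y. deriv g (u y) * deriv u y"])
    show "((\<lambda>y. g (u y)) has_real_derivative deriv g (u x) * deriv u x) (at x)" if "x \<in> S" for x
      using Suc.prems that assms(3)
      by (intro DERIV_chain2 differentiable_upto_Suc_DERIV) auto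
    have "differentiable_upto k S u"
      using Suc.prems differentiable_upto_mono le_SucI by blast
    then have "differentiable_upto k S (\<lambda>y. deriv g (u y))"
      using Suc.IH[of "deriv g"] Suc.prems(1) by (simp add: differentiable_upto_Suc_iff)
    moreover have "differentiable_upto k S (deriv u)"
      using Suc.prems(2) by (simp add: differentiable_upto_Suc_iff)
    ultimately show "differentiable_upto k S (\<lambda>y. deriv g (u y) * deriv u y)"
      by (rule differentiable_upto_mult[OF assms(1)])
  qed
qed

lemma smooth_on_subset: "smooth_on T f \<Longrightarrow> S \<subseteq> T \<Longrightarrow> smooth_on S f"
  unfolding smooth_on_def by blast

lemma smooth_on_cong_open:
  "open S \<Longrightarrow> (\<And>y. y \<in> S \<Longrightarrow> f y = g y) \<Longrightarrow> smooth_on S g \<Longrightarrow> smooth_on S f"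
  unfolding smooth_on_iff_differentiable_upto by (blast intro: differentiable_upto_cong_open)

lemma smooth_on_deriv: "smooth_on S f \<Longrightarrow> smooth_on S (deriv f)"
  unfolding smooth_on_iff_differentiable_upto by (meson differentiable_upto_Suc_iff)

lemma smooth_on_higher_DERIV:
  "smooth_on S f \<Longrightarrow> x \<in> S \<Longrightarrow> ((deriv ^^ j) f has_real_derivative (deriv ^^ Suc j) f x) (at x)"
  unfolding smooth_on_iff_differentiable_upto by (blast intro: differentiable_upto_higher_DERIV)

lemma smooth_on_DERIV: "smooth_on S f \<Longrightarrow> x \<in> S \<Longrightarrow> (f has_real_derivative deriv f x) (at x)"
  using smooth_on_higher_DERIV[of S f x 0] by simp

lemma smooth_on_imp_isCont: "smooth_on S f \<Longrightarrow> x \<in> S \<Longrightarrow> isCont f x"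
  using smooth_on_DERIV DERIV_isCont by blast

lemma smooth_on_const: "open S \<Longrightarrow> smooth_on S (\<lambda>y. a)"
  unfolding smooth_on_iff_differentiable_upto by (blast intro: differentiable_upto_const)

lemma smooth_on_ident: "open S \<Longrightarrow> smooth_on S (\<lambda>y. y)"
  unfolding smooth_on_iff_differentiable_upto by (blast intro: differentiable_upto_ident)

lemma smooth_on_cmult: "open S \<Longrightarrow> smooth_on S f \<Longrightarrow> smooth_on S (\<lambda>y. a * f y)"
  unfolding smooth_on_iff_differentiable_upto by (blast intro: differentiable_upto_cmult)

lemma smooth_on_mult:
  "open S \<Longrightarrow> smooth_on S f \<Longrightarrow> smooth_on S g \<Longrightarrow> smooth_on S (\<lambda>y. f y * g y)"
  unfolding smooth_on_iff_differentiable_upto by (blast intro: differentiable_upto_mult)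

lemma smooth_on_power: "open S \<Longrightarrow> smooth_on S f \<Longrightarrow> smooth_on S (\<lambda>y. f y ^ n)"
  by (induction n) (simp_all add: smooth_on_const smooth_on_mult)

lemma smooth_on_compose:
  "open S \<Longrightarrow> open T \<Longrightarrow> u ` S \<subseteq> T \<Longrightarrow> smooth_on T g \<Longrightarrow> smooth_on S u \<Longrightarrow>
     smooth_on S (\<lambda>y. g (u y))"
  unfolding smooth_on_iff_differentiable_upto by (blast intro: differentiable_upto_compose)

lemma higher_deriv_add:
  assumes "open S" "differentiable_upto k S f" "differentiable_upto k S g" "x \<in> S"
  shows "(deriv ^^ k) (\<lambda>y. f y + g y) x = (deriv ^^ k) f x + (deriv ^^ k) g x"
  using assms(2,3)
proof (induction k arbitrary: f g)
  case (Suc k)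
  have "deriv (\<lambda>y. f y + g y) y = deriv f y + deriv g y" if "y \<in> S" for y
    using Suc.prems that by (intro DERIV_imp_deriv DERIV_add differentiable_upto_Suc_DERIV)
  then have "(deriv ^^ Suc k) (\<lambda>y. f y + g y) x = (deriv ^^ k) (\<lambda>y. deriv f y + deriv g y) x"
    unfolding higher_deriv_Suc by (rule higher_deriv_cong_open[OF assms(1) _ assms(4)])
  also have "\<dots> = (deriv ^^ k) (deriv f) x + (deriv ^^ k) (deriv g) x"
    using Suc.prems by (intro Suc.IH) (simp_all add: differentiable_upto_Suc_iff)
  finally show ?case unfolding higher_deriv_Suc .
qed simp

lemma higher_deriv_cmult:
  assumes "open S" "differentiable_upto k S f" "x \<in> S"
  shows "(deriv ^^ k) (\<lambda>y. a * f y) x = a * (deriv ^^ k) f x"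
  using assms(2)
proof (induction k arbitrary: f)
  case (Suc k)
  have "deriv (\<lambda>y. a * f y) y = a * deriv f y" if "y \<in> S" for y
    using Suc.prems that by (intro DERIV_imp_deriv DERIV_cmult differentiable_upto_Suc_DERIV)
  then have "(deriv ^^ Suc k) (\<lambda>y. a * f y) x = (deriv ^^ k) (\<lambda>y. a * deriv f y) x"
    unfolding higher_deriv_Suc by (rule higher_deriv_cong_open[OF assms(1) _ assms(3)])
  also have "\<dots> = a * (deriv ^^ k) (deriv f) x"
    using Suc.prems by (intro Suc.IH) (simp add: differentiable_upto_Suc_iff)
  finally show ?case unfolding higher_deriv_Suc .
qed simp

lemma higher_deriv_mult_Suc:
  assumes "open S" "smooth_on S f" "smooth_on S g" "x \<in> S"
  shows "(deriv ^^ Suc m) (\<lambda>y. f y * g y) x =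
           (deriv ^^ m) (\<lambda>y. f y * deriv g y) x + (deriv ^^ m) (\<lambda>y. deriv f y * g y) x"
proof -
  have "deriv (\<lambda>y. f y * g y) y = f y * deriv g y + deriv f y * g y" if "y \<in> S" for y
    using assms that by (intro DERIV_imp_deriv DERIV_mult' smooth_on_DERIV)
  then have "(deriv ^^ Suc m) (\<lambda>y. f y * g y) x =
               (deriv ^^ m) (\<lambda>y. f y * deriv g y + deriv f y * g y) x"
    unfolding higher_deriv_Suc by (rule higher_deriv_cong_open[OF assms(1) _ assms(4)])
  also have "\<dots> = (deriv ^^ m) (\<lambda>y. f y * deriv g y) x + (deriv ^^ m) (\<lambda>y. deriv f y * g y) x"
    using assms smooth_on_mult smooth_on_deriv
    by (intro higher_deriv_add) (auto simp: smooth_on_iff_differentiable_upto)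
  finally show ?thesis .
qed

lemma differentiable_upto_inverse: "differentiable_upto k {0<..} (\<lambda>x::real. inverse x)"
proof (induction k)
  case (Suc k)
  have "((\<lambda>x. inverse x) has_real_derivative - 1 * (inverse x * inverse x)) (at x)"
    if "x \<in> {0<..}" for x :: real
    using that by (auto intro!: derivative_eq_intros simp: power2_eq_square)
  moreover have "differentiable_upto k {0<..} (\<lambda>x. - 1 * (inverse x * inverse x :: real))"
    using Suc by (intro differentiable_upto_cmult differentiable_upto_mult) auto
  ultimately show ?case
    by (intro differentiable_upto_SucI[where f'="\<lambda>x. - 1 * (inverse x * inverse x)"]) auto
qed (simp add: differentiable_upto_0)

lemma smooth_on_ln: "smooth_on {0<..} ln"
  unfolding smooth_on_iff_differentiable_upto
proof
  fix k
  have "differentiable_upto (Suc k) {0<..} ln"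
    by (rule differentiable_upto_SucI[OF _ _ differentiable_upto_inverse]) (auto intro: DERIV_ln)
  then show "differentiable_upto k {0<..} ln"
    by (rule differentiable_upto_mono) simp
qed

lemma smooth_on_exp: "smooth_on UNIV exp"
  unfolding smooth_on_iff_differentiable_upto
proof
  show "differentiable_upto k UNIV exp" for k
  proof (induction k)
    case 0
    show ?case unfolding differentiable_upto_0 real_differentiable_def using DERIV_exp by blast
  qed (auto intro: differentiable_upto_SucI[where f'=exp] DERIV_exp)
qed

lemma smooth_on_sqrt: "smooth_on {0<..} sqrt"
proof (rule smooth_on_cong_open)
  show "sqrt x = exp (1/2 * ln x)" if "x \<in> {0<..}" for x
  proof -
    have "sqrt x = x powr (1/2)" using that by (simp add: powr_half_sqrt)
    also have "\<dots> = exp (1/2 * ln x)" unfolding powr_def using that by simp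
    finally show ?thesis .
  qed
  have "smooth_on {0<..} (\<lambda>x. 1/2 * ln x)"
    by (rule smooth_on_cmult[OF _ smooth_on_ln]) simp
  from smooth_on_compose[OF _ open_UNIV _ smooth_on_exp this]
  show "smooth_on {0<..} (\<lambda>x. exp (1/2 * ln x))" by simp
qed simp

section \<open>Uniform bounds on derivatives of families of functions\<close>

definition uniformly_bounded_deriv :: "real set \<Rightarrow> (nat \<Rightarrow> real \<Rightarrow> real) \<Rightarrow> nat \<Rightarrow> bool" where
  "uniformly_bounded_deriv S F k \<longleftrightarrow> (\<exists>M. \<forall>n. \<forall>x\<in>S. \<bar>(deriv ^^ k) (F n) x\<bar> \<le> M)"

lemma uniformly_bounded_deriv_Suc:
  "uniformly_bounded_deriv S F (Suc k) \<longleftrightarrow> uniformly_bounded_deriv S (\<lambda>n. deriv (F n)) k"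
  unfolding uniformly_bounded_deriv_def higher_deriv_Suc ..

lemma uniformly_bounded_deriv_cong_open:
  assumes "open S" "\<And>n y. y \<in> S \<Longrightarrow> F n y = G n y" "uniformly_bounded_deriv S G k"
  shows "uniformly_bounded_deriv S F k"
proof -
  obtain M where "\<forall>n. \<forall>x\<in>S. \<bar>(deriv ^^ k) (G n) x\<bar> \<le> M"
    using assms(3) unfolding uniformly_bounded_deriv_def by blast
  moreover have "(deriv ^^ k) (F n) x = (deriv ^^ k) (G n) x" if "x \<in> S" for n x
    using higher_deriv_cong_open[OF assms(1) assms(2) that] .
  ultimately show ?thesis
    unfolding uniformly_bounded_deriv_def by auto
qed

lemma abs_mult_le_mult: "\<bar>a\<bar> \<le> A \<Longrightarrow> \<bar>b\<bar> \<le> B \<Longrightarrow> \<bar>a * b\<bar> \<le> A * (B :: real)"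
  by (simp add: abs_mult mult_mono')

text \<open>In Leibniz' expansion of \<open>D\<^sup>m (f g)\<close>, the term \<open>f \<cdot> D\<^sup>m g\<close> is the only one involving the
  \<open>m\<close>-th derivative of \<open>g\<close>.\<close>

lemma uniformly_bounded_deriv_mult_remainder:
  assumes "open S" "\<And>n. smooth_on S (f n)" "\<And>n. smooth_on S (g n)"
    and "\<And>j. j \<le> m \<Longrightarrow> uniformly_bounded_deriv S f j"
    and "\<And>j. j < m \<Longrightarrow> uniformly_bounded_deriv S g j"
  shows "\<exists>R. \<forall>n. \<forall>x\<in>S. \<bar>(deriv ^^ m) (\<lambda>y. f n y * g n y) x - f n x * (deriv ^^ m) (g n) x\<bar> \<le> R"
  using assms(2-5)
proof (induction m arbitrary: f g)
  case (Suc m)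
  have "\<exists>R. \<forall>n. \<forall>x\<in>S. \<bar>(deriv ^^ m) (\<lambda>y. f n y * deriv (g n) y) x
                          - f n x * (deriv ^^ m) (deriv (g n)) x\<bar> \<le> R"
    using Suc.prems by (intro Suc.IH smooth_on_deriv) (auto simp: uniformly_bounded_deriv_Suc[symmetric])
  then obtain R1 where R1: "\<forall>n. \<forall>x\<in>S. \<bar>(deriv ^^ m) (\<lambda>y. f n y * deriv (g n) y) x
                          - f n x * (deriv ^^ m) (deriv (g n)) x\<bar> \<le> R1"
    by blast
  have "\<exists>R. \<forall>n. \<forall>x\<in>S. \<bar>(deriv ^^ m) (\<lambda>y. deriv (f n) y * g n y) x
                          - deriv (f n) x * (deriv ^^ m) (g n) x\<bar> \<le> R"
    using Suc.prems by (intro Suc.IH smooth_on_deriv) (auto simp: uniformly_bounded_deriv_Suc[symmetric])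
  then obtain R2 where R2: "\<forall>n. \<forall>x\<in>S. \<bar>(deriv ^^ m) (\<lambda>y. deriv (f n) y * g n y) x
                          - deriv (f n) x * (deriv ^^ m) (g n) x\<bar> \<le> R2"
    by blast
  obtain A where A: "\<forall>n. \<forall>x\<in>S. \<bar>deriv (f n) x\<bar> \<le> A"
    using Suc.prems(3)[of 1] by (auto simp: uniformly_bounded_deriv_def)
  obtain B where B: "\<forall>n. \<forall>x\<in>S. \<bar>(deriv ^^ m) (g n) x\<bar> \<le> B"
    using Suc.prems(4)[of m] by (auto simp: uniformly_bounded_deriv_def)
  have "\<bar>(deriv ^^ Suc m) (\<lambda>y. f n y * g n y) x - f n x * (deriv ^^ Suc m) (g n) x\<bar> \<le> R1 + R2 + A * B"
    if "x \<in> S" for n x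
  proof -
    have "\<bar>deriv (f n) x * (deriv ^^ m) (g n) x\<bar> \<le> A * B"
      using A B that by (intro abs_mult_le_mult) auto
    moreover have "\<bar>(deriv ^^ m) (\<lambda>y. f n y * deriv (g n) y) x
                          - f n x * (deriv ^^ m) (deriv (g n)) x\<bar> \<le> R1"
                  "\<bar>(deriv ^^ m) (\<lambda>y. deriv (f n) y * g n y) x
                          - deriv (f n) x * (deriv ^^ m) (g n) x\<bar> \<le> R2"
      using R1 R2 that by blast+
    ultimately show ?thesis
      unfolding higher_deriv_mult_Suc[OF assms(1) Suc.prems(1,2) that] higher_deriv_Suc[of m "g n"]
      unfolding abs_le_iff by linarith
  qed
  then show ?case by blast
qed (intro exI[of _ 0], simp)

lemma uniformly_bounded_deriv_mult:
  assumes "open S" "\<And>n. smooth_on S (f n)" "\<And>n. smooth_on S (g n)"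
    and "\<And>j. j \<le> m \<Longrightarrow> uniformly_bounded_deriv S f j"
    and "\<And>j. j \<le> m \<Longrightarrow> uniformly_bounded_deriv S g j"
  shows "uniformly_bounded_deriv S (\<lambda>n y. f n y * g n y) m"
proof -
  obtain R where R: "\<forall>n. \<forall>x\<in>S. \<bar>(deriv ^^ m) (\<lambda>y. f n y * g n y) x - f n x * (deriv ^^ m) (g n) x\<bar> \<le> R"
    using uniformly_bounded_deriv_mult_remainder[OF assms(1-4)] assms(5) by (meson less_imp_le)
  obtain A where A: "\<forall>n. \<forall>x\<in>S. \<bar>f n x\<bar> \<le> A"
    using assms(4)[of 0] by (auto simp: uniformly_bounded_deriv_def)
  obtain B where B: "\<forall>n. \<forall>x\<in>S. \<bar>(deriv ^^ m) (g n) x\<bar> \<le> B"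
    using assms(5)[of m] by (auto simp: uniformly_bounded_deriv_def)
  have "\<bar>(deriv ^^ m) (\<lambda>y. f n y * g n y) x\<bar> \<le> R + A * B" if "x \<in> S" for n x
  proof -
    have "\<bar>f n x * (deriv ^^ m) (g n) x\<bar> \<le> A * B"
      using A B that by (intro abs_mult_le_mult) auto
    moreover have "\<bar>(deriv ^^ m) (\<lambda>y. f n y * g n y) x - f n x * (deriv ^^ m) (g n) x\<bar> \<le> R"
      using R that by blast
    ultimately show ?thesis
      unfolding abs_le_iff by linarith
  qed
  then show ?thesis unfolding uniformly_bounded_deriv_def by blast
qed

lemma smooth_on_bounded_on_compact:
  assumes "smooth_on T g" "compact K" "K \<subseteq> T"
  shows "\<exists>M. \<forall>y\<in>K. \<bar>g y\<bar> \<le> M"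
proof -
  have "continuous_on K g"
    using assms smooth_on_imp_isCont continuous_at_imp_continuous_on by blast
  then have "bounded (g ` K)"
    using assms(2) compact_continuous_image compact_imp_bounded by blast
  then show ?thesis unfolding bounded_iff by auto
qed

lemma uniformly_bounded_deriv_compose:
  assumes "open S" "open T" "compact K" "K \<subseteq> T" "\<And>n. smooth_on S (u n)" "\<And>n. u n ` S \<subseteq> K"
    and "smooth_on T g" "\<And>j. 1 \<le> j \<Longrightarrow> j \<le> k \<Longrightarrow> uniformly_bounded_deriv S u j"
  shows "uniformly_bounded_deriv S (\<lambda>n y. g (u n y)) k"
  using assms(7,8)
proof (induction k arbitrary: g rule: less_induct)
  case (less k)
  have uT: "u n ` S \<subseteq> T" for n
    using assms(4,6) by blast
  show ?case
  proof (cases k)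
    case 0
    obtain M where "\<forall>y\<in>K. \<bar>g y\<bar> \<le> M"
      using smooth_on_bounded_on_compact[OF less.prems(1) assms(3,4)] by blast
    then have "\<forall>n. \<forall>x\<in>S. \<bar>g (u n x)\<bar> \<le> M"
      using assms(6) by blast
    then show ?thesis
      unfolding uniformly_bounded_deriv_def 0 by auto
  next
    case (Suc m)
    have "deriv (\<lambda>y. g (u n y)) y = deriv g (u n y) * deriv (u n) y" if "y \<in> S" for n y
      using uT that
      by (intro DERIV_imp_deriv DERIV_chain2[OF smooth_on_DERIV[OF less.prems(1)]
          smooth_on_DERIV[OF assms(5) that]]) blast
    moreover have "uniformly_bounded_deriv S (\<lambda>n y. deriv g (u n y) * deriv (u n) y) m"
    proof (rule uniformly_bounded_deriv_mult[OF assms(1)])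
      show "smooth_on S (\<lambda>y. deriv g (u n y))" for n
        by (rule smooth_on_compose[OF assms(1,2) uT smooth_on_deriv[OF less.prems(1)] assms(5)])
      show "smooth_on S (deriv (u n))" for n
        by (rule smooth_on_deriv[OF assms(5)])
      show "uniformly_bounded_deriv S (\<lambda>n y. deriv g (u n y)) j" if "j \<le> m" for j
      proof (rule less.IH)
        show "j < k" using that Suc by simp
        show "smooth_on T (deriv g)" by (rule smooth_on_deriv[OF less.prems(1)])
        show "uniformly_bounded_deriv S u i" if "1 \<le> i" "i \<le> j" for i
          using less.prems(2) that \<open>j \<le> m\<close> Suc by simp
      qed
      show "uniformly_bounded_deriv S (\<lambda>n. deriv (u n)) j" if "j \<le> m" for j
        using that Suc less.prems(2)[of "Suc j"] by (simp add: uniformly_bounded_deriv_Suc)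
    qed
    ultimately show ?thesis
      unfolding Suc uniformly_bounded_deriv_Suc by (rule uniformly_bounded_deriv_cong_open[OF assms(1)])
  qed
qed

lemma abs_le_of_contracting_recurrence:
  fixes a :: "nat \<Rightarrow> real"
  assumes "0 \<le> q" "q < 1" "\<And>n. \<bar>a (Suc n)\<bar> \<le> q * \<bar>a n\<bar> + R"
  shows "\<bar>a n\<bar> \<le> max \<bar>a 0\<bar> (R / (1 - q))"
proof (induction n)
  case (Suc n)
  define B where "B = max \<bar>a 0\<bar> (R / (1 - q))"
  have "R / (1 - q) * (1 - q) \<le> B * (1 - q)"
    using assms(2) by (intro mult_right_mono) (auto simp: B_def)
  then have "R \<le> (1 - q) * B"
    using assms(2) by (simp add: mult.commute)
  moreover have "q * \<bar>a n\<bar> \<le> q * B"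
    using Suc.IH assms(1) by (simp add: B_def mult_left_mono)
  ultimately show ?case
    using assms(3)[of n] unfolding B_def[symmetric] by (simp add: algebra_simps)
qed simp

lemma funpow_image_subset: "\<sigma> ` S \<subseteq> S \<Longrightarrow> (\<sigma> ^^ n) ` S \<subseteq> S"
  by (induction n) auto

lemma smooth_on_funpow:
  assumes "open S" "smooth_on S \<sigma>" "\<sigma> ` S \<subseteq> S"
  shows "smooth_on S (\<sigma> ^^ n)"
proof (induction n)
  case 0
  then show ?case using smooth_on_ident[OF assms(1)] by (simp add: id_def)
next
  case (Suc n)
  then show ?case
    using smooth_on_compose[OF assms(1,1) funpow_image_subset[OF assms(3)] assms(2)] by (simp add: o_def)
qed

lemma higher_deriv_Suc_const: "(deriv ^^ Suc m) (\<lambda>y. a) = (\<lambda>y. 0 :: real)"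
  by (induction m) (simp_all add: higher_deriv_Suc del: funpow.simps)

lemma deriv_funpow_Suc:
  assumes "open S" "smooth_on S \<sigma>" "\<sigma> ` S \<subseteq> S" "y \<in> S"
  shows "deriv (\<sigma> ^^ Suc n) y = deriv \<sigma> ((\<sigma> ^^ n) y) * deriv (\<sigma> ^^ n) y"
proof -
  have "(\<sigma> ^^ n) y \<in> S"
    using funpow_image_subset[OF assms(3)] assms(4) by blast
  then show ?thesis
    unfolding funpow.simps(2) o_def
    by (intro DERIV_imp_deriv DERIV_chain2[OF smooth_on_DERIV[OF assms(2)]
        smooth_on_DERIV[OF smooth_on_funpow[OF assms(1-3)] assms(4)]])
qed

lemma higher_deriv_funpow_Suc_remainder:
  assumes "open S" "open T" "compact K" "S \<subseteq> K" "K \<subseteq> T" "smooth_on T \<sigma>" "\<sigma> ` S \<subseteq> S"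
    and "\<And>j. 1 \<le> j \<Longrightarrow> j \<le> m \<Longrightarrow> uniformly_bounded_deriv S (\<lambda>n. \<sigma> ^^ n) j"
  shows "\<exists>R. \<forall>n. \<forall>x\<in>S. \<bar>(deriv ^^ m) (deriv (\<sigma> ^^ Suc n)) x
                          - deriv \<sigma> ((\<sigma> ^^ n) x) * (deriv ^^ m) (deriv (\<sigma> ^^ n)) x\<bar> \<le> R"
proof -
  have \<sigma>S: "smooth_on S \<sigma>"
    using smooth_on_subset assms(4-6) by blast
  have iterates: "smooth_on S (\<sigma> ^^ n)" "(\<sigma> ^^ n) ` S \<subseteq> K" for n
    using smooth_on_funpow[OF assms(1) \<sigma>S assms(7)] funpow_image_subset[OF assms(7)] assms(4) by blast+
  have "(deriv ^^ m) (deriv (\<sigma> ^^ Suc n)) x =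
          (deriv ^^ m) (\<lambda>y. deriv \<sigma> ((\<sigma> ^^ n) y) * deriv (\<sigma> ^^ n) y) x" if "x \<in> S" for n x
    using deriv_funpow_Suc[OF assms(1) \<sigma>S assms(7)] by (rule higher_deriv_cong_open[OF assms(1) _ that])
  moreover have "\<exists>R. \<forall>n. \<forall>x\<in>S. \<bar>(deriv ^^ m) (\<lambda>y. deriv \<sigma> ((\<sigma> ^^ n) y) * deriv (\<sigma> ^^ n) y) x
                          - deriv \<sigma> ((\<sigma> ^^ n) x) * (deriv ^^ m) (deriv (\<sigma> ^^ n)) x\<bar> \<le> R"
  proof (rule uniformly_bounded_deriv_mult_remainder[OF assms(1)])
    show "smooth_on S (\<lambda>y. deriv \<sigma> ((\<sigma> ^^ n) y))" for n
      using assms(5) iterates(2)[of n]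
      by (intro smooth_on_compose[OF assms(1,2) _ smooth_on_deriv[OF assms(6)] iterates(1)]) auto
    show "smooth_on S (deriv (\<sigma> ^^ n))" for n
      by (rule smooth_on_deriv[OF iterates(1)])
    show "uniformly_bounded_deriv S (\<lambda>n y. deriv \<sigma> ((\<sigma> ^^ n) y)) j" if "j \<le> m" for j
      using assms(8) that
      by (intro uniformly_bounded_deriv_compose[OF assms(1-3,5) iterates smooth_on_deriv[OF assms(6)]])
        auto
    show "uniformly_bounded_deriv S (\<lambda>n. deriv (\<sigma> ^^ n)) j" if "j < m" for j
      using assms(8)[of "Suc j"] that by (simp add: uniformly_bounded_deriv_Suc)
  qed
  ultimately show ?thesis
    by simp
qed

lemma uniformly_bounded_deriv_funpow:
  assumes "open S" "open T" "compact K" "S \<subseteq> K" "K \<subseteq> T" "smooth_on T \<sigma>" "\<sigma> ` S \<subseteq> S"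
    and "\<And>y. y \<in> S \<Longrightarrow> \<bar>deriv \<sigma> y\<bar> \<le> L" "L < 1" "1 \<le> k"
  shows "uniformly_bounded_deriv S (\<lambda>n. \<sigma> ^^ n) k"
  using assms(10)
proof (induction k rule: less_induct)
  case (less k)
  then obtain m where k: "k = Suc m" by (cases k) auto
  obtain R where R: "\<forall>n. \<forall>x\<in>S. \<bar>(deriv ^^ m) (deriv (\<sigma> ^^ Suc n)) x
                          - deriv \<sigma> ((\<sigma> ^^ n) x) * (deriv ^^ m) (deriv (\<sigma> ^^ n)) x\<bar> \<le> R"
    using higher_deriv_funpow_Suc_remainder[OF assms(1-7)] less.IH k by force
  define q where "q = max 0 L"
  have "\<bar>(deriv ^^ m) (deriv (\<sigma> ^^ n)) x\<bar> \<le> max 1 (R / (1 - q))" if "x \<in> S" for n x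
  proof -
    have "\<bar>(deriv ^^ m) (deriv (\<sigma> ^^ Suc n)) x\<bar> \<le> q * \<bar>(deriv ^^ m) (deriv (\<sigma> ^^ n)) x\<bar> + R" for n
    proof -
      have "\<bar>deriv \<sigma> ((\<sigma> ^^ n) x) * (deriv ^^ m) (deriv (\<sigma> ^^ n)) x\<bar>
              \<le> q * \<bar>(deriv ^^ m) (deriv (\<sigma> ^^ n)) x\<bar>"
        using assms(8)[of "(\<sigma> ^^ n) x"] funpow_image_subset[OF assms(7), of n] that
        by (intro abs_mult_le_mult) (auto simp: q_def)
      moreover have "\<bar>(deriv ^^ m) (deriv (\<sigma> ^^ Suc n)) x
                          - deriv \<sigma> ((\<sigma> ^^ n) x) * (deriv ^^ m) (deriv (\<sigma> ^^ n)) x\<bar> \<le> R"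
        using R that by blast
      ultimately show ?thesis
        unfolding abs_le_iff by linarith
    qed
    moreover have "\<bar>(deriv ^^ m) (deriv (\<sigma> ^^ 0)) x\<bar> \<le> 1"
      using higher_deriv_Suc_const[of "m - 1" 1] by (cases m) auto
    ultimately show ?thesis
      using abs_le_of_contracting_recurrence[of q "\<lambda>n. (deriv ^^ m) (deriv (\<sigma> ^^ n)) x" R n] assms(9)
      by (fastforce simp: q_def)
  qed
  then show ?case
    unfolding k uniformly_bounded_deriv_def higher_deriv_Suc by blast
qed

section \<open>Smoothness of series and of infinite products along iterates\<close>

lemma summable_of_geometric_bound:
  fixes f :: "nat \<Rightarrow> real"
  assumes "0 \<le> q" "q < 1" "\<And>n. \<bar>f n\<bar> \<le> M * q ^ n"
  shows "summable f"
  using assms by (intro summable_comparison_test'[OF summable_mult[OF summable_geometric], of q 0]) auto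

lemma DERIV_higher_deriv_suminf:
  assumes "open S" "convex S" "\<And>n. smooth_on S (a n)" "0 \<le> q" "q < 1"
    and "\<And>n x. x \<in> S \<Longrightarrow> \<bar>(deriv ^^ Suc k) (a n) x\<bar> \<le> M * q ^ n"
    and "\<And>x. x \<in> S \<Longrightarrow> (\<lambda>n. (deriv ^^ k) (a n) x) sums (deriv ^^ k) F x"
    and "x \<in> S"
  shows "((deriv ^^ k) F has_real_derivative (\<Sum>n. (deriv ^^ Suc k) (a n) x)) (at x)"
proof -
  have derivs: "((deriv ^^ k) (a n) has_field_derivative (deriv ^^ Suc k) (a n) y) (at y within S)"
    if "y \<in> S" for n y
    using smooth_on_higher_DERIV[OF assms(3) that] by (rule has_field_derivative_at_within)
  have uniform: "uniform_limit S (\<lambda>n x. \<Sum>i<n. (deriv ^^ Suc k) (a i) x)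
                   (\<lambda>x. \<Sum>i. (deriv ^^ Suc k) (a i) x) sequentially"
    using assms(4-6)
    by (intro Weierstrass_m_test[where M="\<lambda>n. M * q ^ n"] summable_mult summable_geometric) auto
  have "summable (\<lambda>n. (deriv ^^ k) (a n) x)"
    using assms(7,8) sums_summable by blast
  then obtain G where G: "\<forall>y\<in>S. (\<lambda>n. (deriv ^^ k) (a n) y) sums G y \<and>
      (G has_field_derivative (\<Sum>i. (deriv ^^ Suc k) (a i) y)) (at y within S)"
    using has_field_derivative_series[OF assms(2) derivs uniform assms(8)] by blast
  then have "(G has_field_derivative (\<Sum>i. (deriv ^^ Suc k) (a i) x)) (at x)"
    using assms(8) at_within_open[OF assms(8,1)] by auto
  moreover have "G y = (deriv ^^ k) F y" if "y \<in> S" for y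
    using G assms(7) that sums_unique2 by blast
  ultimately show ?thesis
    by (rule has_field_derivative_transform_within_open[OF _ assms(1,8)])
qed

lemma smooth_on_suminf:
  assumes "open S" "convex S" "\<And>n. smooth_on S (a n)" "0 \<le> q" "q < 1"
    and bound: "\<And>k. \<exists>M. \<forall>n. \<forall>x\<in>S. \<bar>(deriv ^^ k) (a n) x\<bar> \<le> M * q ^ n"
  shows "smooth_on S (\<lambda>x. \<Sum>n. a n x)"
proof -
  define F where "F = (\<lambda>x. \<Sum>n. a n x)"
  have summable: "summable (\<lambda>n. (deriv ^^ k) (a n) x)" if "x \<in> S" for k x
  proof -
    obtain M where "\<forall>n. \<forall>x\<in>S. \<bar>(deriv ^^ k) (a n) x\<bar> \<le> M * q ^ n"
      using bound by blast
    then show ?thesis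
      using that by (intro summable_of_geometric_bound[OF assms(4,5)]) auto
  qed
  have DERIV: "((deriv ^^ k) F has_real_derivative (\<Sum>n. (deriv ^^ Suc k) (a n) x)) (at x)"
    if "\<forall>y\<in>S. (\<lambda>n. (deriv ^^ k) (a n) y) sums (deriv ^^ k) F y" "x \<in> S" for k x
  proof -
    obtain M where "\<forall>n. \<forall>x\<in>S. \<bar>(deriv ^^ Suc k) (a n) x\<bar> \<le> M * q ^ n"
      using bound by blast
    then show ?thesis
      using that by (intro DERIV_higher_deriv_suminf[OF assms(1-5)]) auto
  qed
  have sums: "\<forall>x\<in>S. (\<lambda>n. (deriv ^^ k) (a n) x) sums (deriv ^^ k) F x" for k
  proof (induction k)
    case 0
    show ?case using summable[of _ 0] by (simp add: F_def summable_sums)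
  next
    case (Suc k)
    show ?case
    proof
      fix x assume x: "x \<in> S"
      have "(deriv ^^ Suc k) F x = (\<Sum>n. (deriv ^^ Suc k) (a n) x)"
        using DERIV_imp_deriv[OF DERIV[OF Suc x]] by simp
      then show "(\<lambda>n. (deriv ^^ Suc k) (a n) x) sums (deriv ^^ Suc k) F x"
        using summable_sums[OF summable[OF x, of "Suc k"]] by simp
    qed
  qed
  show ?thesis
    unfolding smooth_on_def F_def[symmetric] real_differentiable_def using DERIV[OF sums] by blast
qed

lemma smooth_on_suminf_geometric:
  assumes "open S" "convex S" "\<And>n. smooth_on S (b n)" "\<And>k. uniformly_bounded_deriv S b k"
    and "0 \<le> q" "q < 1"
  shows "\<forall>x\<in>S. summable (\<lambda>n. q ^ n * b n x)"
    and "smooth_on S (\<lambda>x. \<Sum>n. q ^ n * b n x)"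
proof -
  have bound: "\<exists>M. \<forall>n. \<forall>x\<in>S. \<bar>(deriv ^^ k) (\<lambda>y. q ^ n * b n y) x\<bar> \<le> M * q ^ n" for k
  proof -
    obtain M where M: "\<forall>n. \<forall>x\<in>S. \<bar>(deriv ^^ k) (b n) x\<bar> \<le> M"
      using assms(4) unfolding uniformly_bounded_deriv_def by blast
    have "\<bar>(deriv ^^ k) (\<lambda>y. q ^ n * b n y) x\<bar> \<le> M * q ^ n" if "x \<in> S" for n x
    proof -
      have "(deriv ^^ k) (\<lambda>y. q ^ n * b n y) x = q ^ n * (deriv ^^ k) (b n) x"
        using assms(3)[of n]
        by (intro higher_deriv_cmult[OF assms(1) _ that]) (simp add: smooth_on_iff_differentiable_upto)
      moreover have "q ^ n * \<bar>(deriv ^^ k) (b n) x\<bar> \<le> q ^ n * M"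
        using M that assms(5) by (intro mult_left_mono) auto
      ultimately show ?thesis
        using assms(5) by (simp add: abs_mult mult.commute)
    qed
    then show ?thesis by blast
  qed
  show "\<forall>x\<in>S. summable (\<lambda>n. q ^ n * b n x)"
  proof
    fix x assume "x \<in> S"
    obtain M where "\<forall>n. \<forall>x\<in>S. \<bar>(deriv ^^ 0) (\<lambda>y. q ^ n * b n y) x\<bar> \<le> M * q ^ n"
      using bound by blast
    then show "summable (\<lambda>n. q ^ n * b n x)"
      using \<open>x \<in> S\<close> by (intro summable_of_geometric_bound[OF assms(5,6)]) auto
  qed
  show "smooth_on S (\<lambda>x. \<Sum>n. q ^ n * b n x)"
    using assms(3) by (intro smooth_on_suminf[OF assms(1,2) _ assms(5,6) bound] smooth_on_cmult[OF assms(1)])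
qed

lemma smooth_on_suminf_iterates:
  assumes "open S" "convex S" "open T" "compact K" "S \<subseteq> K" "K \<subseteq> T"
    and "smooth_on T \<sigma>" "\<sigma> ` S \<subseteq> S" "\<And>y. y \<in> S \<Longrightarrow> \<bar>deriv \<sigma> y\<bar> \<le> L" "L < 1"
    and "smooth_on T h" "0 \<le> q" "q < 1"
  shows "\<forall>x\<in>S. summable (\<lambda>n. q ^ n * h ((\<sigma> ^^ n) x))"
    and "smooth_on S (\<lambda>x. \<Sum>n. q ^ n * h ((\<sigma> ^^ n) x))"
proof -
  have iterates: "smooth_on S (\<sigma> ^^ n)" "(\<sigma> ^^ n) ` S \<subseteq> K" for n
    using smooth_on_funpow[OF assms(1) smooth_on_subset[OF assms(7)] assms(8)]
      funpow_image_subset[OF assms(8)] assms(5,6) by blast+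
  have smooth: "smooth_on S (\<lambda>y. h ((\<sigma> ^^ n) y))" for n
    using iterates(2)[of n] assms(6) by (intro smooth_on_compose[OF assms(1,3) _ assms(11) iterates(1)]) auto
  have bounded: "uniformly_bounded_deriv S (\<lambda>n y. h ((\<sigma> ^^ n) y)) k" for k
    using uniformly_bounded_deriv_funpow[OF assms(1,3-10)]
    by (intro uniformly_bounded_deriv_compose[OF assms(1,3,4,6) iterates assms(11)])
  note series = smooth_on_suminf_geometric[OF assms(1,2) smooth bounded assms(12,13)]
  show "\<forall>x\<in>S. summable (\<lambda>n. q ^ n * h ((\<sigma> ^^ n) x))"
    by (rule series(1))
  show "smooth_on S (\<lambda>x. \<Sum>n. q ^ n * h ((\<sigma> ^^ n) x))"
    by (rule series(2))
qed

lemma prodinf_powr_iterates: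
  assumes "open S" "convex S" "open T" "compact K" "S \<subseteq> K" "K \<subseteq> T"
    and "smooth_on T \<sigma>" "\<sigma> ` S \<subseteq> S" "\<And>y. y \<in> S \<Longrightarrow> \<bar>deriv \<sigma> y\<bar> \<le> L" "L < 1"
    and "smooth_on T c" "\<And>y. y \<in> T \<Longrightarrow> 0 < c y" "0 \<le> q" "q < 1"
  shows "\<forall>x\<in>S. convergent_prod (\<lambda>n. c ((\<sigma> ^^ n) x) powr q ^ n) \<and>
                 0 < prodinf (\<lambda>n. c ((\<sigma> ^^ n) x) powr q ^ n)"
    and "smooth_on S (\<lambda>x. prodinf (\<lambda>n. c ((\<sigma> ^^ n) x) powr q ^ n))"
proof -
  have "smooth_on T (\<lambda>y. ln (c y))"
    using assms(12) by (intro smooth_on_compose[OF assms(3) _ _ smooth_on_ln assms(11)]) auto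
  note log_series = smooth_on_suminf_iterates[OF assms(1-10) this assms(13,14)]
  have powr_eq: "c ((\<sigma> ^^ n) x) powr q ^ n = exp (q ^ n * ln (c ((\<sigma> ^^ n) x)))" if "x \<in> S" for n x
  proof -
    have "(\<sigma> ^^ n) x \<in> T"
      using funpow_image_subset[OF assms(8), of n] assms(5,6) that by blast
    from assms(12)[OF this] show ?thesis
      by (simp add: powr_def)
  qed
  have prodinf_eq: "prodinf (\<lambda>n. c ((\<sigma> ^^ n) x) powr q ^ n) = exp (\<Sum>n. q ^ n * ln (c ((\<sigma> ^^ n) x)))"
    if "x \<in> S" for x
    using log_series(1) that by (simp add: powr_eq prodinf_exp)
  show "\<forall>x\<in>S. convergent_prod (\<lambda>n. c ((\<sigma> ^^ n) x) powr q ^ n) \<and>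
                 0 < prodinf (\<lambda>n. c ((\<sigma> ^^ n) x) powr q ^ n)"
  proof
    fix x assume "x \<in> S"
    then show "convergent_prod (\<lambda>n. c ((\<sigma> ^^ n) x) powr q ^ n) \<and>
                 0 < prodinf (\<lambda>n. c ((\<sigma> ^^ n) x) powr q ^ n)"
      unfolding prodinf_eq[OF \<open>x \<in> S\<close>] using log_series(1) by (simp add: powr_eq convergent_prod_exp)
  qed
  show "smooth_on S (\<lambda>x. prodinf (\<lambda>n. c ((\<sigma> ^^ n) x) powr q ^ n))"
    using smooth_on_compose[OF assms(1) open_UNIV _ smooth_on_exp log_series(2)]
    by (intro smooth_on_cong_open[OF assms(1) prodinf_eq]) auto
qed

lemma image_ball_subset_if_abs_deriv_le_1:
  fixes \<sigma> :: "real \<Rightarrow> real"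
  assumes "\<sigma> a = a" "\<And>y. y \<in> ball a r \<Longrightarrow> (\<sigma> has_real_derivative \<sigma>' y) (at y)"
    and "\<And>y. y \<in> ball a r \<Longrightarrow> \<bar>\<sigma>' y\<bar> \<le> 1"
  shows "\<sigma> ` ball a r \<subseteq> ball a r"
proof
  fix z assume "z \<in> \<sigma> ` ball a r"
  then obtain y where y: "y \<in> ball a r" "z = \<sigma> y" by blast
  then have "a \<in> ball a r"
    using le_less_trans[OF zero_le_dist] by auto
  then have "norm (\<sigma> y - \<sigma> a) \<le> 1 * norm (y - a)"
    using assms(2,3) y(1)
    by (intro field_differentiable_bound[OF convex_ball]) (auto intro: has_field_derivative_at_within)
  then show "z \<in> ball a r"
    using y assms(1) by (simp add: dist_norm norm_minus_commute)
qed

lemma prodinf_powr_iterates_near_attracting_fixed_point: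
  fixes \<sigma> c :: "real \<Rightarrow> real"
  assumes "open W" "a \<in> W" "smooth_on W \<sigma>" "\<sigma> a = a" "\<bar>deriv \<sigma> a\<bar> < 1"
    and "smooth_on W c" "0 < c a" "0 \<le> q" "q < 1"
  obtains r where "0 < r" "ball a r \<subseteq> W" "\<sigma> ` ball a r \<subseteq> ball a r"
    "\<forall>x\<in>ball a r. convergent_prod (\<lambda>n. c ((\<sigma> ^^ n) x) powr q ^ n) \<and>
                   0 < prodinf (\<lambda>n. c ((\<sigma> ^^ n) x) powr q ^ n)"
    "smooth_on (ball a r) (\<lambda>x. prodinf (\<lambda>n. c ((\<sigma> ^^ n) x) powr q ^ n))"
proof -
  define L where "L = (1 + \<bar>deriv \<sigma> a\<bar>) / 2"
  have L: "\<bar>deriv \<sigma> a\<bar> < L" "L < 1"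
    using assms(5) by (auto simp: L_def)
  define T where "T = W \<inter> (\<lambda>y. (c y, deriv \<sigma> y)) -` ({0<..} \<times> {-L<..<L})"
  have "continuous_on W (\<lambda>y. (c y, deriv \<sigma> y))"
    using assms(3,6) smooth_on_deriv
    by (intro continuous_at_imp_continuous_on ballI continuous_Pair smooth_on_imp_isCont) auto
  then have "open T"
    unfolding T_def by (rule continuous_open_preimage[OF _ assms(1)]) (simp add: open_Times)
  moreover have "a \<in> T"
    using assms(2,7) L(1) by (auto simp: T_def abs_less_iff)
  ultimately obtain r where r: "0 < r" "cball a r \<subseteq> T"
    using open_contains_cball by blast
  have T: "T \<subseteq> W" "\<And>y. y \<in> T \<Longrightarrow> 0 < c y \<and> \<bar>deriv \<sigma> y\<bar> < L"
    by (auto simp: T_def abs_less_iff)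
  have ball_T: "ball a r \<subseteq> T"
    using r(2) ball_subset_cball by blast
  have invariant: "\<sigma> ` ball a r \<subseteq> ball a r"
    using ball_T T L(2) smooth_on_DERIV[OF assms(3)]
    by (intro image_ball_subset_if_abs_deriv_le_1[of \<sigma> a r "deriv \<sigma>"] assms(4)) force+
  note products = prodinf_powr_iterates[OF open_ball convex_ball \<open>open T\<close> compact_cball
      ball_subset_cball r(2) smooth_on_subset[OF assms(3) T(1)] invariant _ L(2)
      smooth_on_subset[OF assms(6) T(1)] _ assms(8,9)]
  show thesis
    using ball_T T by (intro that[OF r(1) _ invariant] products) force+
qed

lemma right_inverse_factor_at_0:
  fixes \<theta> b c :: "real \<Rightarrow> real"
  assumes "open W" "0 \<in> W" "\<And>x. x \<in> W \<Longrightarrow> \<theta> x = x * c x" "\<And>x. x \<in> W \<Longrightarrow> \<theta> x * b (\<theta> x) = x"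
    and "isCont c 0" "isCont b 0"
  shows "c 0 * b 0 = 1"
proof -
  have "((\<lambda>x. x * c x) \<longlongrightarrow> 0) (at 0)"
    using tendsto_mult[OF tendsto_ident_at assms(5)[unfolded isCont_def]] by simp
  then have "((\<lambda>x. b (x * c x)) \<longlongrightarrow> b 0) (at 0)"
    by (rule isCont_tendsto_compose[OF assms(6)])
  then have "((\<lambda>x. c x * b (x * c x)) \<longlongrightarrow> c 0 * b 0) (at 0)"
    by (rule tendsto_mult[OF assms(5)[unfolded isCont_def]])
  moreover have "\<forall>\<^sub>F x in at 0. c x * b (x * c x) = 1"
    using eventually_conj[OF eventually_at_in_open'[OF assms(1,2)] eventually_neq_at_within[of 0 0]]
  proof (rule eventually_mono)
    fix x :: real assume "x \<in> W \<and> x \<noteq> 0"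
    then show "c x * b (x * c x) = 1"
      using assms(3,4)[of x] by (simp add: mult.assoc)
  qed
  ultimately have "((\<lambda>x. 1) \<longlongrightarrow> c 0 * b 0) (at (0::real))"
    using tendsto_cong by force
  then show ?thesis
    by (simp add: tendsto_const_iff)
qed

theorem proposition3p8:
  fixes b \<phi> \<theta> c :: "real \<Rightarrow> real" and U W :: "real set"
  assumes U: "open U" "0 \<in> U" and b_smooth: "smooth_on U b"
    and b_def: "\<And>t. b t = 1 + \<phi> t" and \<phi>_flat: "flat_at_0 \<phi>"
    and W: "open W" "0 \<in> W" and \<theta>_smooth: "smooth_on W \<theta>"
    and \<theta>0: "\<theta> 0 = 0" and \<theta>_into: "\<theta> ` W \<subseteq> U"
    and \<theta>_right_inv: "\<And>x. x \<in> W \<Longrightarrow> \<theta> x * b (\<theta> x) = x"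
    and \<theta>_left_inv: "\<exists>W'. open W' \<and> 0 \<in> W' \<and> W' \<subseteq> U \<and>
                     (\<forall>t\<in>W'. t * b t \<in> W \<and> \<theta> (t * b t) = t)"
    and c_smooth: "smooth_on W c" and \<theta>_c: "\<And>x. x \<in> W \<Longrightarrow> \<theta> x = x * c x"
  shows "\<exists>V. open V \<and> 0 \<in> V \<and> V \<subseteq> W \<and>
           (\<forall>x\<in>V. \<forall>n. ((\<lambda>y. (\<theta> y) ^ 4) ^^ n) x \<in> W) \<and>
           (\<forall>x\<in>V. convergent_prod (\<lambda>n. c (((\<lambda>y. (\<theta> y) ^ 4) ^^ n) x) powr (1 / 4 ^ n))) \<and>
           smooth_on V (\<lambda>x. sqrt (prodinf (\<lambda>n. c (((\<lambda>y. (\<theta> y) ^ 4) ^^ n) x) powr (1 / 4 ^ n))))"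
proof -
  define \<sigma> where "\<sigma> = (\<lambda>y. \<theta> y ^ 4)"
  have "b 0 = 1"
    using \<phi>_flat[unfolded flat_at_0_def, THEN spec[of _ 0]] b_def[of 0] by simp
  moreover have "c 0 * b 0 = 1"
    by (rule right_inverse_factor_at_0[OF W \<theta>_c \<theta>_right_inv smooth_on_imp_isCont[OF c_smooth W(2)]
          smooth_on_imp_isCont[OF b_smooth U(2)]])
  ultimately have "c 0 = 1" by simp
  have \<sigma>_smooth: "smooth_on W \<sigma>"
    unfolding \<sigma>_def by (rule smooth_on_power[OF W(1) \<theta>_smooth])
  have "deriv \<sigma> 0 = 0"
    unfolding \<sigma>_def using smooth_on_DERIV[OF \<theta>_smooth W(2)] \<theta>0
    by (auto intro!: DERIV_imp_deriv derivative_eq_intros)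
  then obtain r where r: "0 < r" "ball 0 r \<subseteq> W" "\<sigma> ` ball 0 r \<subseteq> ball 0 r"
    and products: "\<forall>x\<in>ball 0 r. convergent_prod (\<lambda>n. c ((\<sigma> ^^ n) x) powr (1/4) ^ n) \<and>
                                  0 < prodinf (\<lambda>n. c ((\<sigma> ^^ n) x) powr (1/4) ^ n)"
    and smooth: "smooth_on (ball 0 r) (\<lambda>x. prodinf (\<lambda>n. c ((\<sigma> ^^ n) x) powr (1/4) ^ n))"
    using \<open>c 0 = 1\<close> \<theta>0
    by (auto intro: prodinf_powr_iterates_near_attracting_fixed_point[OF W \<sigma>_smooth, of c "1/4"]
        simp: \<sigma>_def c_smooth)
  have "smooth_on (ball 0 r) (\<lambda>x. sqrt (prodinf (\<lambda>n. c ((\<sigma> ^^ n) x) powr (1/4) ^ n)))"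
    using products by (intro smooth_on_compose[OF open_ball _ _ smooth_on_sqrt smooth]) auto
  moreover have "(\<sigma> ^^ n) x \<in> W" if "x \<in> ball 0 r" for x n
    using funpow_image_subset[OF r(3)] r(2) that by blast
  ultimately show ?thesis
    using r products unfolding \<sigma>_def power_one_over by (intro exI[of _ "ball 0 r"]) auto
qed

end
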